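(* Let $\ell\ge 13$ be an odd integer. Let $F$ be a weighted graph with edge weight $\omega:E(F)\to\{3,4,5\}$. Assume that $F=T\cup P$, where $T$ is a spanning tree of $F$ all of whose edges have weight $3$ and $P$ is a non-spanning path with end-vertices $x$ and $y$. If $F$ has no cycle of odd weight smaller than $\ell+4$, and every $x,y$-path in $F$ has weight at least $\ell$, then $|N^1_F[P]|\ge\frac{\ell}{3}+\frac{4}{3}$.
   Context: The weight of a subgraph is the sum of the weights of its edges. $N^1_F[P]$ is the closed neighbourhood of $V(P)$ in $F$: all vertices at distance at most $1$ in $F$ from some vertex of $P$. A path is non-spanning if it does not contain all vertices of $F$. *)

theory Defs
  imports Complex_Main
begin

definition graph :: "'a set \<Rightarrow> 'a set set \<Rightarrow> bool" where
  "graph V E \<longleftrightarrow> finite V \<and> (\<forall>e\<in>E. \<exists>u v. e = {u, v} \<and> u \<noteq> v \<and> u \<in> V \<and> v \<in> V)"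

definition is_path :: "'a set set \<Rightarrow> 'a list \<Rightarrow> bool" where
  "is_path E p \<longleftrightarrow> p \<noteq> [] \<and> distinct p \<and> (\<forall>i < length p - 1. {p ! i, p ! (i + 1)} \<in> E)"

definition path_edges :: "'a list \<Rightarrow> 'a set set" where
  "path_edges p = {{p ! i, p ! (i + 1)} | i. i < length p - 1}"

definition path_weight :: "('a set \<Rightarrow> nat) \<Rightarrow> 'a list \<Rightarrow> nat" where
  "path_weight w p = (\<Sum>i < length p - 1. w {p ! i, p ! (i + 1)})"

definition is_cycle :: "'a set set \<Rightarrow> 'a list \<Rightarrow> bool" where
  "is_cycle E c \<longleftrightarrow> length c \<ge> 3 \<and> distinct c \<and>
     (\<forall>i < length c. {c ! i, c ! ((i + 1) mod length c)} \<in> E)"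

definition cycle_weight :: "('a set \<Rightarrow> nat) \<Rightarrow> 'a list \<Rightarrow> nat" where
  "cycle_weight w c = (\<Sum>i < length c. w {c ! i, c ! ((i + 1) mod length c)})"

definition connected_on :: "'a set \<Rightarrow> 'a set set \<Rightarrow> bool" where
  "connected_on V E \<longleftrightarrow> (\<forall>u\<in>V. \<forall>v\<in>V. \<exists>p. is_path E p \<and> hd p = u \<and> last p = v)"

definition spanning_tree :: "'a set \<Rightarrow> 'a set set \<Rightarrow> 'a set set \<Rightarrow> bool" where
  "spanning_tree V E T \<longleftrightarrow> T \<subseteq> E \<and> connected_on V T \<and> \<not> (\<exists>c. is_cycle T c)"

definition closed_nbhd :: "'a set \<Rightarrow> 'a set set \<Rightarrow> 'a set \<Rightarrow> 'a set" where
  "closed_nbhd V E S = S \<union> {v \<in> V. \<exists>u\<in>S. {u, v} \<in> E}"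

end

(*
  Write N[P] for the closed neighbourhood of P in T \<union> P. Induction over the suffixes of P shows
  that either some walk from the first to the last vertex of P has weight at most 3 |N[P]| - 4, or
  F has an odd cycle of weight at most 3 |N[P]|; under the hypotheses both give l + 4 \<le> 3 |N[P]|.

  In the induction step let C be the component of T[N[P]] containing the first vertex x of P; as T
  is spanning and P is not, C contains a vertex off P. Let P_b be the last vertex of P in C and Q a
  path of T[C] from x to P_b, of weight 3 (|Q| - 1). If P_b ends P, then Q is short enough unless
  V(Q) = N[P]. Otherwise the neighbourhood N' of the suffix after P_b is disjoint from C, and Q
  followed by the edge P_b P_(b+1) and the walk given by induction is short enough unless V(Q) = C
  and N[P] = C \<union> N'. In these tight cases, following P from x until it first leaves the part of Q
  before a vertex of Q off P yields either an edge of P between two vertices at distance at least 2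
  on Q, which closes a cycle with Q (when that cycle is even, the edge shortens Q by at least 2),
  or a step of P into N' next to a later vertex of P, where induction applies again.
*)

theory Submission
  imports Defs
begin

fun is_walk :: "'a set set \<Rightarrow> 'a list \<Rightarrow> bool" where
  "is_walk E [] \<longleftrightarrow> False"
| "is_walk E [v] \<longleftrightarrow> True"
| "is_walk E (u # v # r) \<longleftrightarrow> {u, v} \<in> E \<and> is_walk E (v # r)"

fun walk_weight :: "('a set \<Rightarrow> nat) \<Rightarrow> 'a list \<Rightarrow> nat" where
  "walk_weight w (u # v # r) = w {u, v} + walk_weight w (v # r)"
| "walk_weight w _ = 0"

lemma is_walk_iff_nth:
  "is_walk E q \<longleftrightarrow> q \<noteq> [] \<and> (\<forall>i < length q - 1. {q ! i, q ! Suc i} \<in> E)"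
  by (induction E q rule: is_walk.induct) (auto simp: less_Suc_eq_0_disj)

lemma walk_weight_eq_sum: "walk_weight w q = (\<Sum>i < length q - 1. w {q ! i, q ! Suc i})"
  by (induction w q rule: walk_weight.induct)
    (auto simp del: sum.lessThan_Suc simp add: sum.lessThan_Suc_shift)

lemma is_path_iff_walk: "is_path E q \<longleftrightarrow> is_walk E q \<and> distinct q"
  unfolding is_path_def is_walk_iff_nth by auto

lemma path_weight_eq_walk_weight: "path_weight w q = walk_weight w q"
  unfolding path_weight_def walk_weight_eq_sum by simp

lemma is_walk_append:
  "xs \<noteq> [] \<Longrightarrow> ys \<noteq> [] \<Longrightarrow>
    is_walk E (xs @ ys) \<longleftrightarrow> is_walk E xs \<and> {last xs, hd ys} \<in> E \<and> is_walk E ys"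
  by (induction xs rule: induct_list012) (auto simp: neq_Nil_conv)

lemma walk_weight_append:
  "xs \<noteq> [] \<Longrightarrow> ys \<noteq> [] \<Longrightarrow>
    walk_weight w (xs @ ys) = walk_weight w xs + w {last xs, hd ys} + walk_weight w ys"
  by (induction xs rule: induct_list012) (auto simp: neq_Nil_conv)

lemma is_walk_nonempty: "is_walk E q \<Longrightarrow> q \<noteq> []"
  by auto

lemma is_walk_mono: "is_walk E q \<Longrightarrow> E \<subseteq> E' \<Longrightarrow> is_walk E' q"
  by (induction E q rule: is_walk.induct) auto

lemma walk_weight_const:
  "is_walk T q \<Longrightarrow> \<forall>e\<in>T. w e = k \<Longrightarrow> walk_weight w q = k * (length q - 1)"
  by (induction T q rule: is_walk.induct) auto

lemma is_walk_take: "is_walk E q \<Longrightarrow> 0 < n \<Longrightarrow> is_walk E (take n q)"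
  unfolding is_walk_iff_nth by (cases q) auto

lemma is_walk_drop: "is_walk E q \<Longrightarrow> n < length q \<Longrightarrow> is_walk E (drop n q)"
  unfolding is_walk_iff_nth by (auto simp: add.commute add.left_commute)

lemma walk_weight_Cons_ge: "walk_weight w q \<le> walk_weight w (v # q)"
  by (cases q) auto

lemma walk_weight_drop_le: "walk_weight w (drop n q) \<le> walk_weight w q"
  by (induction q arbitrary: n) (auto simp: drop_Cons' intro: order_trans[OF _ walk_weight_Cons_ge])

lemma walk_leaves_set:
  "is_walk E q \<Longrightarrow> hd q \<in> A \<Longrightarrow> last q \<notin> A \<Longrightarrow> \<exists>u v. {u, v} \<in> E \<and> u \<in> A \<and> v \<notin> A"
  by (induction E q rule: is_walk.induct) auto

lemma set_walk_subset_Union: "is_walk E (u # v # r) \<Longrightarrow> set (u # v # r) \<subseteq> \<Union>E"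
  by (induction r arbitrary: u v) auto

lemma walk_to_path:
  "is_walk E q \<Longrightarrow> \<exists>p. is_walk E p \<and> distinct p \<and> hd p = hd q \<and> last p = last q
     \<and> set p \<subseteq> set q \<and> walk_weight w p \<le> walk_weight w q"
proof (induction E q rule: is_walk.induct)
  case (2 E v)
  then show ?case by (intro exI[of _ "[v]"]) auto
next
  case (3 E u v r)
  then have uv: "{u, v} \<in> E" by simp
  obtain p where p: "is_walk E p" "distinct p" "hd p = v" "last p = last (v # r)"
      "set p \<subseteq> set (v # r)" "walk_weight w p \<le> walk_weight w (v # r)"
    using 3 by auto
  then obtain p' where p_Cons: "p = v # p'" by (cases p) auto
  show ?case
  proof (cases "u \<in> set p")
    case True
    then obtain k where k: "k < length p" "p ! k = u" by (meson in_set_conv_nth)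
    show ?thesis
    proof (intro exI conjI)
      show "is_walk E (drop k p)" using is_walk_drop p(1) k(1) .
      show "distinct (drop k p)" using p(2) by simp
      show "hd (drop k p) = hd (u # v # r)" using k by (simp add: hd_drop_conv_nth)
      show "last (drop k p) = last (u # v # r)" using k p(4) by simp
      show "set (drop k p) \<subseteq> set (u # v # r)" using p(5) set_drop_subset by fastforce
      show "walk_weight w (drop k p) \<le> walk_weight w (u # v # r)"
        using walk_weight_drop_le[of w k p] p(6) walk_weight_Cons_ge[of w "v # r" u] by linarith
    qed
  next
    case False
    show ?thesis
    proof (intro exI conjI)
      show "is_walk E (u # p)" using p(1) uv p_Cons by simp
      show "walk_weight w (u # p) \<le> walk_weight w (u # v # r)" using p(6) p_Cons by simp
      show "distinct (u # p)" using False p(2) by simp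
      show "hd (u # p) = hd (u # v # r)" by simp
      show "last (u # p) = last (u # v # r)" using p(4) p_Cons by simp
      show "set (u # p) \<subseteq> set (u # v # r)" using p(5) by auto
    qed
  qed
qed (simp)

definition reach_within :: "'a set set \<Rightarrow> 'a set \<Rightarrow> 'a \<Rightarrow> 'a set" where
  "reach_within T N x = {v. \<exists>q. is_walk T q \<and> hd q = x \<and> last q = v \<and> set q \<subseteq> N}"

lemma reach_within_subset: "reach_within T N x \<subseteq> N"
proof
  fix v assume "v \<in> reach_within T N x"
  then obtain q where "is_walk T q" "last q = v" "set q \<subseteq> N" unfolding reach_within_def by blast
  then show "v \<in> N" using last_in_set[OF is_walk_nonempty] by blast
qed

lemma start_in_reach_within: "x \<in> N \<Longrightarrow> x \<in> reach_within T N x"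
  unfolding reach_within_def by (intro CollectI exI[of _ "[x]"]) simp

lemma reach_within_step:
  assumes "v \<in> reach_within T N x" "{v, u} \<in> T" "u \<in> N"
  shows "u \<in> reach_within T N x"
proof -
  obtain q where q: "is_walk T q" "hd q = x" "last q = v" "set q \<subseteq> N"
    using assms(1) unfolding reach_within_def by blast
  then have "q \<noteq> []" by auto
  then have "is_walk T (q @ [u])" "hd (q @ [u]) = x"
    using q(1-3) assms(2) is_walk_append[of q "[u]" T] by auto
  moreover have "set (q @ [u]) \<subseteq> N" using q(4) assms(3) by simp
  ultimately show ?thesis unfolding reach_within_def by force
qed

lemma walk_in_reach_within:
  assumes "is_walk T q" "hd q = x" "set q \<subseteq> N"
  shows "set q \<subseteq> reach_within T N x"
proof
  fix v assume "v \<in> set q"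
  then obtain i where i: "i < length q" "q ! i = v" by (meson in_set_conv_nth)
  have "is_walk T (take (Suc i) q)" using assms(1) is_walk_take by blast
  moreover have "hd (take (Suc i) q) = x" using assms(2) i(1) by (cases q) auto
  moreover have "last (take (Suc i) q) = v" using i by (simp add: take_Suc_conv_app_nth)
  moreover have "set (take (Suc i) q) \<subseteq> N" using assms(3) set_take_subset by fastforce
  ultimately show "v \<in> reach_within T N x" unfolding reach_within_def by blast
qed

lemma path_in_reach_within:
  assumes "v \<in> reach_within T N x"
  shows "\<exists>Q. is_walk T Q \<and> distinct Q \<and> hd Q = x \<and> last Q = v \<and> set Q \<subseteq> reach_within T N x"
proof -
  obtain q where q: "is_walk T q" "hd q = x" "last q = v" "set q \<subseteq> N"
    using assms unfolding reach_within_def by blast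
  obtain Q where Q: "is_walk T Q" "distinct Q" "hd Q = hd q" "last Q = last q" "set Q \<subseteq> set q"
    using walk_to_path[OF q(1), of "\<lambda>_. 0"] by blast
  have "set Q \<subseteq> reach_within T N x" using walk_in_reach_within[OF q(1,2,4)] Q(5) by blast
  with Q q(2,3) show ?thesis by blast
qed

lemma reach_within_escapes:
  assumes "connected_on V T" "S \<subseteq> V" "S \<noteq> V" "x \<in> S" "S \<subseteq> N"
    and nbrs: "\<And>u v. u \<in> S \<Longrightarrow> {u, v} \<in> T \<Longrightarrow> v \<in> N"
  shows "\<not> reach_within T N x \<subseteq> S"
proof
  assume reach_S: "reach_within T N x \<subseteq> S"
  obtain z where z: "z \<in> V" "z \<notin> S" using assms(2,3) by auto
  have "x \<in> V" using assms(2,4) by blast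
  then obtain r where r: "is_path T r" "hd r = x" "last r = z"
    using assms(1) z(1) unfolding connected_on_def by meson
  have "is_walk T r" using r(1) is_path_iff_walk by blast
  moreover have "hd r \<in> reach_within T N x" using r(2) assms(4,5) by (auto intro: start_in_reach_within)
  moreover have "last r \<notin> reach_within T N x" using r(3) reach_S z(2) by blast
  ultimately obtain u v where uv: "{u, v} \<in> T" "u \<in> reach_within T N x" "v \<notin> reach_within T N x"
    using walk_leaves_set by metis
  have "v \<in> N" using nbrs[of u v] uv(1,2) reach_S by (meson subsetD)
  then show False using reach_within_step[OF uv(2,1)] uv(3) by metis
qed

lemma path_edge_nth: "Suc i < length p \<Longrightarrow> {p ! i, p ! Suc i} \<in> path_edges p"
  unfolding path_edges_def by force

lemma path_edges_drop_subset: "path_edges (drop m P) \<subseteq> path_edges P"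
proof
  fix e assume "e \<in> path_edges (drop m P)"
  then obtain i where "i < length (drop m P) - 1" "e = {drop m P ! i, drop m P ! (i + 1)}"
    unfolding path_edges_def by blast
  then show "e \<in> path_edges P" using path_edge_nth[of "m + i" P] by auto
qed

lemma path_edge_in_path: "{u, v} \<in> path_edges P \<Longrightarrow> v \<in> set P"
  unfolding path_edges_def by (auto simp: doubleton_eq_iff)

lemma nth_in_set_take_iff:
  assumes "distinct xs" "i < length xs"
  shows "xs ! i \<in> set (take n xs) \<longleftrightarrow> i < n"
proof
  assume "xs ! i \<in> set (take n xs)"
  then obtain j where "j < length (take n xs)" "take n xs ! j = xs ! i" by (meson in_set_conv_nth)
  then show "i < n" using assms by (simp add: nth_eq_iff_index_eq)
next
  assume "i < n"
  then show "xs ! i \<in> set (take n xs)"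
    using assms(2) by (metis in_set_conv_nth length_take min_less_iff_conj nth_take)
qed

lemma path_crossing:
  assumes "distinct Q" "distinct P" "hd Q = hd P" "last Q = P ! b" "b < length P"
    and "\<beta> < length Q" "Q ! \<beta> \<notin> set P"
  shows "(\<exists>a g. a + 2 \<le> g \<and> g < length Q \<and> {Q ! a, Q ! g} \<in> path_edges P)
    \<or> (\<exists>a e. a + 3 \<le> length Q \<and> Q ! a = P ! e \<and> Suc e \<le> b \<and> P ! Suc e \<notin> set Q)"
proof -
  have "Q \<noteq> []" "P \<noteq> []" using assms(5,6) by auto
  then have Q0: "Q ! 0 = P ! 0" and QL: "Q ! (length Q - 1) = P ! b"
    using assms(3,4) by (simp_all add: hd_conv_nth last_conv_nth)
  have "P ! 0 \<in> set P" "P ! b \<in> set P" using assms(5) \<open>P \<noteq> []\<close> by auto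
  then have "\<beta> \<noteq> 0" "\<beta> \<noteq> length Q - 1" using assms(7) Q0 QL by metis+
  then have \<beta>: "0 < \<beta>" "\<beta> + 1 < length Q" using assms(6) by auto
  define A where "A = set (take \<beta> Q)"
  have in_A: "Q ! i \<in> A \<longleftrightarrow> i < \<beta>" if "i < length Q" for i
    unfolding A_def using nth_in_set_take_iff assms(1) that .
  define j where "j = (LEAST j. P ! j \<notin> A)"
  have "P ! b \<notin> A" using in_A[of "length Q - 1"] QL \<beta> by simp
  then have j: "P ! j \<notin> A" "j \<le> b" unfolding j_def by (metis LeastI, metis Least_le)
  moreover have "P ! 0 \<in> A" using in_A[of 0] Q0 \<beta> \<open>Q \<noteq> []\<close> by simp
  ultimately obtain e where e: "j = Suc e" by (metis not0_implies_Suc)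
  then have "P ! e \<in> A" using not_less_Least[of e "\<lambda>j. P ! j \<notin> A"] unfolding j_def by auto
  then obtain a where a: "a < \<beta>" "Q ! a = P ! e"
    unfolding A_def in_set_conv_nth by auto
  have Suc_e: "Suc e < length P" using j(2) e assms(5) by simp
  show ?thesis
  proof (cases "P ! Suc e \<in> set Q")
    case True
    then obtain g where g: "g < length Q" "Q ! g = P ! Suc e" by (meson in_set_conv_nth)
    have "g \<noteq> \<beta>" using g(2) assms(7) Suc_e nth_mem by metis
    moreover have "\<beta> \<le> g" using in_A[OF g(1)] g(2) j(1) e by simp
    moreover have "{Q ! a, Q ! g} \<in> path_edges P" using a(2) g(2) path_edge_nth[OF Suc_e] by simp
    ultimately show ?thesis using a(1) g(1) by (intro disjI1 exI[of _ a] exI[of _ g]) simp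
  next
    case False
    then show ?thesis using a \<beta> j(2) e by (intro disjI2 exI[of _ a] exI[of _ e]) simp
  qed
qed

locale tree_weighted_graph =
  fixes V :: "'a set" and E T :: "'a set set" and w :: "'a set \<Rightarrow> nat"
  assumes graph: "graph V E"
    and tree_subset: "T \<subseteq> E"
    and tree_connected: "connected_on V T"
    and tree_weight: "\<forall>e\<in>T. w e = 3"
    and weight_range: "\<forall>e\<in>E. w e \<in> {3, 4, 5}"
begin

lemma edge_in_V: "{u, v} \<in> E \<Longrightarrow> u \<in> V \<and> v \<in> V"
  using graph unfolding graph_def by (metis doubleton_eq_iff)

lemma Union_E_subset_V: "\<Union>E \<subseteq> V"
proof
  fix x assume "x \<in> \<Union>E"
  then obtain e where "e \<in> E" "x \<in> e" by blast
  moreover obtain a b where "e = {a, b}" "a \<in> V" "b \<in> V"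
    using graph \<open>e \<in> E\<close> unfolding graph_def by meson
  ultimately show "x \<in> V" by auto
qed

lemma walk_in_V: "is_walk E (u # v # r) \<Longrightarrow> set (u # v # r) \<subseteq> V"
  using set_walk_subset_Union Union_E_subset_V by (rule order_trans)

lemma weight_le_5: "e \<in> E \<Longrightarrow> w e \<le> 5"
  using weight_range by fastforce

lemma tree_walk_weight: "is_walk T q \<Longrightarrow> walk_weight w q = 3 * (length q - 1)"
  using walk_weight_const tree_weight by blast

lemma tree_walk_take:
  assumes "is_walk T Q" "a < length Q"
  shows "is_walk E (take (Suc a) Q) \<and> hd (take (Suc a) Q) = hd Q \<and> last (take (Suc a) Q) = Q ! a
    \<and> walk_weight w (take (Suc a) Q) = 3 * a"
proof -
  have walk: "is_walk T (take (Suc a) Q)" using is_walk_take[OF assms(1)] by blast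
  then have "is_walk E (take (Suc a) Q)" using is_walk_mono tree_subset by blast
  moreover have "walk_weight w (take (Suc a) Q) = 3 * a" using tree_walk_weight[OF walk] assms(2) by simp
  moreover have "last (take (Suc a) Q) = Q ! a" using assms(2) by (simp add: take_Suc_conv_app_nth)
  ultimately show ?thesis by simp
qed

lemma chord_shortcut:
  assumes "is_walk T Q" "a \<le> g" "g < length Q" "{Q ! a, Q ! g} \<in> E"
  shows "\<exists>q. is_walk E q \<and> hd q = hd Q \<and> last q = last Q
    \<and> walk_weight w q = 3 * (length Q - 1 - (g - a)) + w {Q ! a, Q ! g}"
proof -
  define q1 where "q1 = take (Suc a) Q"
  define q2 where "q2 = drop g Q"
  have q1: "q1 \<noteq> []" "is_walk E q1" "hd q1 = hd Q" "last q1 = Q ! a" "walk_weight w q1 = 3 * a"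
    using tree_walk_take[OF assms(1)] assms(2,3) unfolding q1_def by auto
  have q2_T: "is_walk T q2" using is_walk_drop assms(1,3) unfolding q2_def by blast
  have q2: "q2 \<noteq> []" "is_walk E q2" "hd q2 = Q ! g" "last q2 = last Q"
    "walk_weight w q2 = 3 * (length Q - 1 - g)"
    using assms(3) q2_T is_walk_mono tree_subset tree_walk_weight unfolding q2_def
    by (auto simp: hd_drop_conv_nth)
  show ?thesis
  proof (intro exI conjI)
    show "is_walk E (q1 @ q2)" using q1 q2 assms(4) by (simp add: is_walk_append)
    show "walk_weight w (q1 @ q2) = 3 * (length Q - 1 - (g - a)) + w {Q ! a, Q ! g}"
      using q1 q2 assms(2,3) by (simp add: walk_weight_append)
  qed (use q1 q2 in auto)
qed

lemma chord_cycle: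
  assumes "is_walk T Q" "distinct Q" "a + 2 \<le> g" "g < length Q" "{Q ! a, Q ! g} \<in> E"
  defines "c \<equiv> take (Suc (g - a)) (drop a Q)"
  shows "is_cycle E c \<and> cycle_weight w c = 3 * (g - a) + w {Q ! a, Q ! g}"
proof -
  have len_c: "length c = Suc (g - a)" using assms(3,4) unfolding c_def by auto
  have c_nth: "c ! i = Q ! (a + i)" if "i \<le> g - a" for i using assms(3,4) that unfolding c_def by auto
  have Q_edge: "{Q ! j, Q ! Suc j} \<in> T" if "Suc j < length Q" for j
    using assms(1) that unfolding is_walk_iff_nth by auto
  have tree_edge: "{c ! i, c ! ((i + 1) mod length c)} \<in> T" if "i < g - a" for i
    using that len_c c_nth[of i] c_nth[of "Suc i"] Q_edge[of "a + i"] assms(4) by simp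
  have chord: "{c ! (g - a), c ! ((g - a + 1) mod length c)} = {Q ! a, Q ! g}"
    using len_c c_nth[of "g - a"] c_nth[of 0] assms(3) by (simp add: insert_commute)
  have "is_cycle E c"
    unfolding is_cycle_def
  proof (intro conjI allI impI)
    show "3 \<le> length c" using len_c assms(3) by simp
    show "distinct c" unfolding c_def using assms(2) by simp
    fix i assume "i < length c"
    then consider "i < g - a" | "i = g - a" using len_c by linarith
    then show "{c ! i, c ! ((i + 1) mod length c)} \<in> E"
      using tree_edge chord assms(5) tree_subset by cases auto
  qed
  moreover have "cycle_weight w c = 3 * (g - a) + w {Q ! a, Q ! g}"
  proof -
    have "cycle_weight w c = (\<Sum>i < g - a. w {c ! i, c ! ((i + 1) mod length c)})
        + w {c ! (g - a), c ! ((g - a + 1) mod length c)}"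
      unfolding cycle_weight_def len_c by simp
    also have "(\<Sum>i < g - a. w {c ! i, c ! ((i + 1) mod length c)}) = 3 * (g - a)"
      using tree_edge tree_weight by simp
    finally show ?thesis using chord by simp
  qed
  ultimately show ?thesis by blast
qed

lemma chord_odd_cycle_or_shortcut:
  assumes "is_walk T Q" "distinct Q" "a + 2 \<le> g" "g < length Q" "{Q ! a, Q ! g} \<in> E"
  shows "(\<exists>c. is_cycle E c \<and> odd (cycle_weight w c) \<and> cycle_weight w c \<le> 3 * (g - a) + 5)
    \<or> (\<exists>q. is_walk E q \<and> hd q = hd Q \<and> last q = last Q \<and> walk_weight w q + 2 \<le> 3 * (length Q - 1))"
proof (cases "odd (3 * (g - a) + w {Q ! a, Q ! g})")
  case True
  then show ?thesis using chord_cycle[OF assms] weight_le_5[OF assms(5)] by auto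
next
  case even: False
  have chord_weight: "w {Q ! a, Q ! g} \<in> {3, 4, 5}" using weight_range assms(5) by auto
  have "w {Q ! a, Q ! g} + 2 \<le> 3 * (g - a)"
  proof (cases "g - a = 2")
    case True
    then show ?thesis using chord_weight even by auto
  next
    case False
    then show ?thesis using chord_weight assms(3) by auto
  qed
  moreover obtain q where "is_walk E q" "hd q = hd Q" "last q = last Q"
    "walk_weight w q = 3 * (length Q - 1 - (g - a)) + w {Q ! a, Q ! g}"
    using chord_shortcut[OF assms(1) _ assms(4,5)] assms(3) by auto
  ultimately show ?thesis using assms(3,4) by (intro disjI2 exI[of _ q]) auto
qed

text \<open>N^1_F[P] for F = T \<union> P; the induction passes to suffixes of P, each with only its own
  path edges.\<close>

definition nbhd :: "'a list \<Rightarrow> 'a set" where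
  "nbhd P = closed_nbhd V (T \<union> path_edges P) (set P)"

text \<open>The weight bound 3 n - 4 is stated additively to avoid truncated subtraction.\<close>

definition cheap_walk :: "'a \<Rightarrow> 'a \<Rightarrow> nat \<Rightarrow> bool" where
  "cheap_walk u v n \<longleftrightarrow> (\<exists>q. is_walk E q \<and> hd q = u \<and> last q = v \<and> walk_weight w q + 4 \<le> 3 * n)"

definition cheap_odd_cycle :: "nat \<Rightarrow> bool" where
  "cheap_odd_cycle n \<longleftrightarrow> (\<exists>c. is_cycle E c \<and> odd (cycle_weight w c) \<and> cycle_weight w c \<le> 3 * n)"

definition nbhd_bound :: "'a list \<Rightarrow> bool" where
  "nbhd_bound P \<longleftrightarrow> cheap_walk (hd P) (last P) (card (nbhd P)) \<or> cheap_odd_cycle (card (nbhd P))"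

lemma cheap_walk_mono: "cheap_walk u v n \<Longrightarrow> n \<le> m \<Longrightarrow> cheap_walk u v m"
  unfolding cheap_walk_def by fastforce

lemma cheap_odd_cycle_mono: "cheap_odd_cycle n \<Longrightarrow> n \<le> m \<Longrightarrow> cheap_odd_cycle m"
  unfolding cheap_odd_cycle_def by fastforce

lemma cheap_walk_prepend:
  assumes "is_walk E q" "{last q, v} \<in> E" "walk_weight w q + w {last q, v} \<le> 3 * k"
    and "cheap_walk v y n"
  shows "cheap_walk (hd q) y (k + n)"
proof -
  obtain r where r: "is_walk E r" "hd r = v" "last r = y" "walk_weight w r + 4 \<le> 3 * n"
    using assms(4) unfolding cheap_walk_def by blast
  have "r \<noteq> []" "q \<noteq> []" using r(1) assms(1) by auto
  then have "is_walk E (q @ r)" "walk_weight w (q @ r) = walk_weight w q + w {last q, v} + walk_weight w r"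
    using assms(1,2) r(1,2) by (simp_all add: is_walk_append walk_weight_append)
  moreover have "hd (q @ r) = hd q" "last (q @ r) = y" using \<open>q \<noteq> []\<close> \<open>r \<noteq> []\<close> r(3) by auto
  ultimately show ?thesis using assms(3) r(4) unfolding cheap_walk_def by (intro exI[of _ "q @ r"]) auto
qed

lemma nbhd_drop_subset: "nbhd (drop m P) \<subseteq> nbhd P"
  unfolding nbhd_def closed_nbhd_def
  using path_edges_drop_subset[of m P] set_drop_subset[of m P] by blast

lemma set_subset_nbhd: "set P \<subseteq> nbhd P"
  unfolding nbhd_def closed_nbhd_def by blast

lemma nbhd_subset_V: "set P \<subseteq> V \<Longrightarrow> nbhd P \<subseteq> V"
  unfolding nbhd_def closed_nbhd_def by blast

lemma finite_nbhd: "set P \<subseteq> V \<Longrightarrow> finite (nbhd P)"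
  by (meson finite_subset graph graph_def nbhd_subset_V)

lemma tree_neighbour_in_nbhd: "u \<in> set P \<Longrightarrow> {u, v} \<in> T \<Longrightarrow> v \<in> nbhd P"
  using edge_in_V tree_subset unfolding nbhd_def closed_nbhd_def by blast

lemma nbhd_tree_neighbour:
  assumes "v \<in> nbhd P" "v \<notin> set P"
  shows "\<exists>u \<in> set P. {u, v} \<in> T"
  using assms unfolding nbhd_def closed_nbhd_def by (auto dest: path_edge_in_path)

end

locale tree_path_graph = tree_weighted_graph +
  fixes P :: "'a list"
  assumes path_nonempty: "P \<noteq> []"
    and path_distinct: "distinct P"
    and path_in_E: "path_edges P \<subseteq> E"
    and path_in_V: "set P \<subseteq> V"
    and path_nonspanning: "set P \<noteq> V"
begin

abbreviation N :: "'a set" where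
  "N \<equiv> nbhd P"

definition C :: "'a set" where
  "C = reach_within T N (hd P)"

lemma finite_N: "finite N"
  using finite_nbhd path_in_V by blast

lemma C_subset_N: "C \<subseteq> N"
  unfolding C_def by (rule reach_within_subset)

lemma finite_C: "finite C"
  using finite_N C_subset_N by (rule finite_subset[rotated])

lemma hd_in_N: "hd P \<in> N"
  using set_subset_nbhd path_nonempty hd_in_set by (metis subsetD)

lemma hd_in_C: "hd P \<in> C"
  unfolding C_def using hd_in_N by (rule start_in_reach_within)

lemma C_step: "v \<in> C \<Longrightarrow> {v, u} \<in> T \<Longrightarrow> u \<in> N \<Longrightarrow> u \<in> C"
  unfolding C_def by (rule reach_within_step)

lemma C_not_subset_path: "\<not> C \<subseteq> set P"
  unfolding C_def
proof (rule reach_within_escapes[OF tree_connected path_in_V path_nonspanning])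
  show "hd P \<in> set P" using path_nonempty by simp
qed (auto intro: set_subset_nbhd[THEN subsetD] tree_neighbour_in_nbhd)

definition lastC :: nat where
  "lastC = Max {i. i < length P \<and> P ! i \<in> C}"

lemma lastC_less: "lastC < length P" and nth_lastC_in_C: "P ! lastC \<in> C"
proof -
  have "0 \<in> {i. i < length P \<and> P ! i \<in> C}"
    using hd_in_C path_nonempty by (simp add: hd_conv_nth)
  then have "lastC \<in> {i. i < length P \<and> P ! i \<in> C}"
    unfolding lastC_def by (intro Max_in) auto
  then show "lastC < length P" "P ! lastC \<in> C" by auto
qed

lemma notin_C_after_lastC: "u \<in> set (drop (Suc lastC) P) \<Longrightarrow> u \<notin> C"
proof
  assume "u \<in> set (drop (Suc lastC) P)" "u \<in> C"
  then obtain i where "i < length (drop (Suc lastC) P)" "drop (Suc lastC) P ! i = u"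
    by (meson in_set_conv_nth)
  then have "Suc lastC + i < length P" "P ! (Suc lastC + i) \<in> C" using \<open>u \<in> C\<close> by auto
  then have "Suc lastC + i \<le> lastC" unfolding lastC_def by (intro Max_ge) auto
  then show False by simp
qed

lemma C_tree_path_exists:
  "\<exists>Q. is_walk T Q \<and> distinct Q \<and> hd Q = hd P \<and> last Q = P ! lastC \<and> set Q \<subseteq> C"
  using path_in_reach_within[of "P ! lastC" T N "hd P"] nth_lastC_in_C unfolding C_def by simp

abbreviation N_rest :: "'a set" where
  "N_rest \<equiv> nbhd (drop (Suc lastC) P)"

lemma C_disjoint_N_rest: "C \<inter> N_rest = {}"
proof (rule ccontr)
  assume "C \<inter> N_rest \<noteq> {}"
  then obtain v where v: "v \<in> C" "v \<in> N_rest" by blast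
  then have "v \<notin> set (drop (Suc lastC) P)" using notin_C_after_lastC by metis
  then obtain u where u: "u \<in> set (drop (Suc lastC) P)" "{u, v} \<in> T"
    using nbhd_tree_neighbour v(2) by metis
  have "u \<in> N" using u(1) set_subset_nbhd set_drop_subset by (metis subsetD)
  then have "u \<in> C" using C_step[OF v(1)] u(2) by (simp add: insert_commute)
  then show False using notin_C_after_lastC u(1) by metis
qed

lemma finite_N_rest: "finite N_rest"
  using finite_nbhd path_in_V set_drop_subset by (metis order_trans)

lemma C_union_N_rest_subset: "C \<union> N_rest \<subseteq> N"
  using C_subset_N nbhd_drop_subset by auto

lemma card_C_N_rest: "card C + card N_rest \<le> card N"
  using card_Un_disjoint[OF finite_C finite_N_rest C_disjoint_N_rest]
    card_mono[OF finite_N C_union_N_rest_subset] by simp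

lemma C_union_N_rest_eq: "card C + card N_rest = card N \<Longrightarrow> C \<union> N_rest = N"
  using card_Un_disjoint[OF finite_C finite_N_rest C_disjoint_N_rest]
    card_subset_eq[OF finite_N C_union_N_rest_subset] by simp

lemma next_in_N_rest: "Suc lastC < length P \<Longrightarrow> P ! Suc lastC \<in> N_rest"
  using set_subset_nbhd[of "drop (Suc lastC) P"] by (simp add: Cons_nth_drop_Suc[symmetric])

lemma cheap_walk_or_odd_cycle_from_N_rest:
  assumes IH: "\<And>m. 0 < m \<Longrightarrow> m < length P \<Longrightarrow> nbhd_bound (drop m P)"
    and v: "v \<in> N_rest" "v \<notin> set (drop (Suc lastC) P)"
  shows "cheap_walk v (last P) (1 + card N_rest) \<or> cheap_odd_cycle (card N_rest)"
proof -
  obtain u where u: "u \<in> set (drop (Suc lastC) P)" "{u, v} \<in> T"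
    using nbhd_tree_neighbour v by metis
  then obtain i where "i < length (drop (Suc lastC) P)" "drop (Suc lastC) P ! i = u"
    by (meson in_set_conv_nth)
  then have i: "Suc lastC + i < length P" "P ! (Suc lastC + i) = u" by auto
  define m where "m = Suc lastC + i"
  have "nbhd (drop m P) \<subseteq> N_rest"
    using nbhd_drop_subset[of i "drop (Suc lastC) P"] unfolding m_def by (simp add: add.commute)
  then have card_N_m: "card (nbhd (drop m P)) \<le> card N_rest" using finite_N_rest card_mono by blast
  have "nbhd_bound (drop m P)" using IH i(1) unfolding m_def by simp
  then have "cheap_walk u (last P) (card (nbhd (drop m P))) \<or> cheap_odd_cycle (card (nbhd (drop m P)))"
    using i unfolding nbhd_bound_def m_def by (simp add: hd_drop_conv_nth)
  then show ?thesis
  proof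
    assume walk_u: "cheap_walk u (last P) (card (nbhd (drop m P)))"
    have "{last [v], u} \<in> E" using u(2) tree_subset by (auto simp: insert_commute)
    moreover have "walk_weight w [v] + w {last [v], u} \<le> 3 * 1"
      using u(2) tree_weight by (simp add: insert_commute)
    ultimately have "cheap_walk v (last P) (1 + card (nbhd (drop m P)))"
      using cheap_walk_prepend[of "[v]" u 1] walk_u by simp
    then show ?thesis using card_N_m cheap_walk_mono by (intro disjI1) fastforce
  next
    assume "cheap_odd_cycle (card (nbhd (drop m P)))"
    then show ?thesis using cheap_odd_cycle_mono card_N_m by blast
  qed
qed

context
  fixes Q :: "'a list"
  assumes Q_walk: "is_walk T Q" and Q_distinct: "distinct Q" and Q_hd: "hd Q = hd P"
    and Q_last: "last Q = P ! lastC" and Q_subset: "set Q \<subseteq> C"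
begin

lemma Q_nonempty: "Q \<noteq> []"
  using Q_walk by auto

lemma Q_weight: "walk_weight w Q + 3 = 3 * length Q"
  using tree_walk_weight[OF Q_walk] Q_nonempty by (cases Q) auto

lemma length_Q_le_card_C: "length Q \<le> card C"
  using card_mono[OF finite_C Q_subset] distinct_card[OF Q_distinct] by simp

lemma C_tree_path_crossing:
  assumes "set Q = C"
  shows "(\<exists>a g. a + 2 \<le> g \<and> g < length Q \<and> {Q ! a, Q ! g} \<in> path_edges P)
    \<or> (\<exists>a e. a + 3 \<le> length Q \<and> Q ! a = P ! e \<and> Suc e \<le> lastC \<and> P ! Suc e \<notin> set Q)"
proof -
  obtain z where "z \<in> C" "z \<notin> set P" using C_not_subset_path by auto
  then obtain \<beta> where "\<beta> < length Q" "Q ! \<beta> \<notin> set P"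
    using assms by (metis in_set_conv_nth)
  then show ?thesis using path_crossing[OF Q_distinct path_distinct Q_hd Q_last lastC_less] by blast
qed

lemma cheap_walk_if_lastC_last:
  assumes "lastC = length P - 1"
  shows "cheap_walk (hd P) (last P) (card N)"
proof -
  have Q_last': "last Q = last P" using Q_last assms path_nonempty by (simp add: last_conv_nth)
  show ?thesis
  proof (cases "length Q < card N")
    case True
    then show ?thesis
      using Q_walk tree_subset Q_hd Q_last' Q_weight Q_nonempty unfolding cheap_walk_def
      by (intro exI[of _ Q]) (auto intro: is_walk_mono)
  next
    case False
    have "set Q \<subseteq> N" using Q_subset C_subset_N by blast
    then have Q_N: "set Q = N"
      using False finite_N distinct_card[OF Q_distinct] by (metis card_seteq not_less)
    then have "set Q = C" using Q_subset C_subset_N by blast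
    from C_tree_path_crossing[OF this] show ?thesis
    proof (elim disjE exE conjE)
      fix a g assume ag: "a + 2 \<le> g" "g < length Q" "{Q ! a, Q ! g} \<in> path_edges P"
      then have chord: "{Q ! a, Q ! g} \<in> E" using path_in_E by blast
      obtain q where "is_walk E q" "hd q = hd Q" "last q = last Q"
        "walk_weight w q = 3 * (length Q - 1 - (g - a)) + w {Q ! a, Q ! g}"
        using chord_shortcut[OF Q_walk _ ag(2) chord] ag(1) by auto
      moreover have "card N = length Q" using Q_N distinct_card[OF Q_distinct] by simp
      ultimately show ?thesis
        using weight_le_5[OF chord] ag(1,2) Q_hd Q_last' unfolding cheap_walk_def
        by (intro exI[of _ q]) auto
    next
      fix a e assume "Suc e \<le> lastC" "P ! Suc e \<notin> set Q"
      then show ?thesis using Q_N set_subset_nbhd lastC_less by (metis le_less_trans nth_mem subsetD)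
    qed
  qed
qed

lemma cheap_walk_via_tree_path:
  assumes "Suc lastC < length P" "cheap_walk (P ! Suc lastC) (last P) n"
  shows "cheap_walk (hd P) (last P) (length Q + 1 + n)"
proof -
  have edge: "{last Q, P ! Suc lastC} \<in> E" using Q_last path_edge_nth[OF assms(1)] path_in_E by auto
  have "walk_weight w Q + w {last Q, P ! Suc lastC} \<le> 3 * (length Q + 1)"
    using Q_weight weight_le_5[OF edge] by simp
  then have "cheap_walk (hd Q) (last P) (length Q + 1 + n)"
    using cheap_walk_prepend[OF is_walk_mono[OF Q_walk tree_subset] edge _ assms(2)] by blast
  then show ?thesis using Q_hd by simp
qed

lemma cheap_walk_or_odd_cycle_via_chord:
  assumes "a + 2 \<le> g" "g < length Q" "{Q ! a, Q ! g} \<in> E"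
    and "Suc lastC < length P" "cheap_walk (P ! Suc lastC) (last P) n"
  shows "cheap_walk (hd P) (last P) (length Q + n) \<or> cheap_odd_cycle (length Q + 1)"
  using chord_odd_cycle_or_shortcut[OF Q_walk Q_distinct assms(1-3)]
proof (elim disjE exE conjE)
  fix c assume "is_cycle E c" "odd (cycle_weight w c)" "cycle_weight w c \<le> 3 * (g - a) + 5"
  then show ?thesis using assms(1,2) unfolding cheap_odd_cycle_def by (intro disjI2 exI[of _ c]) auto
next
  fix q assume q: "is_walk E q" "hd q = hd Q" "last q = last Q" "walk_weight w q + 2 \<le> 3 * (length Q - 1)"
  have edge: "{last q, P ! Suc lastC} \<in> E" using q(3) Q_last path_edge_nth[OF assms(4)] path_in_E by auto
  have "walk_weight w q + w {last q, P ! Suc lastC} \<le> 3 * length Q"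
    using q(4) weight_le_5[OF edge] by simp
  then have "cheap_walk (hd q) (last P) (length Q + n)"
    using cheap_walk_prepend[OF q(1) edge _ assms(5)] by blast
  then show ?thesis using q(2) Q_hd by simp
qed

lemma cheap_walk_or_odd_cycle_via_detour:
  assumes IH: "\<And>m. 0 < m \<Longrightarrow> m < length P \<Longrightarrow> nbhd_bound (drop m P)"
    and a: "a + 3 \<le> length Q" "Q ! a = P ! e"
    and e: "Suc e \<le> lastC" "P ! Suc e \<in> N_rest"
  shows "cheap_walk (hd P) (last P) (length Q + card N_rest) \<or> cheap_odd_cycle (card N_rest)"
proof -
  have "P ! Suc e \<in> set (take (Suc lastC) P)"
    using nth_in_set_take_iff[OF path_distinct] e(1) lastC_less by simp
  then have "P ! Suc e \<notin> set (drop (Suc lastC) P)"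
    using path_distinct distinct_append[of "take (Suc lastC) P" "drop (Suc lastC) P"] by auto
  from cheap_walk_or_odd_cycle_from_N_rest[OF IH e(2) this] show ?thesis
  proof
    assume walk_e: "cheap_walk (P ! Suc e) (last P) (1 + card N_rest)"
    define q where "q = take (Suc a) Q"
    have q: "is_walk E q" "hd q = hd P" "last q = P ! e" "walk_weight w q = 3 * a"
      using tree_walk_take[OF Q_walk, of a] a Q_hd unfolding q_def by auto
    have edge: "{last q, P ! Suc e} \<in> E"
      using q(3) path_edge_nth[of e P] path_in_E e(1) lastC_less by auto
    have "walk_weight w q + w {last q, P ! Suc e} \<le> 3 * (a + 2)"
      using q(4) weight_le_5[OF edge] by simp
    then have "cheap_walk (hd q) (last P) (a + 2 + (1 + card N_rest))"
      using cheap_walk_prepend[OF q(1) edge _ walk_e] by blast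
    then show ?thesis using q(2) a(1) cheap_walk_mono by (intro disjI1) fastforce
  next
    assume "cheap_odd_cycle (card N_rest)"
    then show ?thesis ..
  qed
qed

lemma nbhd_bound_via_rest_walk:
  assumes IH: "\<And>m. 0 < m \<Longrightarrow> m < length P \<Longrightarrow> nbhd_bound (drop m P)"
    and rest: "Suc lastC < length P" "cheap_walk (P ! Suc lastC) (last P) (card N_rest)"
  shows "nbhd_bound P"
proof -
  consider (slack) "length Q + 1 + card N_rest \<le> card N"
    | (tight) "length Q = card C" "card C + card N_rest = card N"
    using length_Q_le_card_C card_C_N_rest by linarith
  then show ?thesis
  proof cases
    case slack
    have "cheap_walk (hd P) (last P) (card N)"
      using cheap_walk_mono[OF cheap_walk_via_tree_path[OF rest] slack] .
    then show ?thesis unfolding nbhd_bound_def ..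
  next
    case tight
    have Q_C: "set Q = C"
      by (rule card_subset_eq[OF finite_C Q_subset]) (simp add: distinct_card[OF Q_distinct] tight(1))
    have "0 < card N_rest" using next_in_N_rest[OF rest(1)] finite_N_rest by (auto simp: card_gt_0_iff)
    then have "length Q + 1 \<le> card N" using tight by simp
    from C_tree_path_crossing[OF Q_C] show ?thesis
    proof (elim disjE exE conjE)
      fix a g assume ag: "a + 2 \<le> g" "g < length Q" "{Q ! a, Q ! g} \<in> path_edges P"
      then have "{Q ! a, Q ! g} \<in> E" using path_in_E by auto
      from cheap_walk_or_odd_cycle_via_chord[OF ag(1,2) this rest] show ?thesis
      proof
        assume "cheap_walk (hd P) (last P) (length Q + card N_rest)"
        then show ?thesis using tight unfolding nbhd_bound_def by simp
      next
        assume "cheap_odd_cycle (length Q + 1)"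
        then show ?thesis using cheap_odd_cycle_mono \<open>length Q + 1 \<le> card N\<close>
          unfolding nbhd_bound_def by blast
      qed
    next
      fix a e assume ae: "a + 3 \<le> length Q" "Q ! a = P ! e" "Suc e \<le> lastC" "P ! Suc e \<notin> set Q"
      have "P ! Suc e \<in> N" using set_subset_nbhd ae(3) lastC_less by (meson le_less_trans nth_mem subsetD)
      then have "P ! Suc e \<in> N_rest" using C_union_N_rest_eq[OF tight(2)] ae(4) Q_C by blast
      from cheap_walk_or_odd_cycle_via_detour[OF IH ae(1-3) this] show ?thesis
      proof
        assume "cheap_walk (hd P) (last P) (length Q + card N_rest)"
        then show ?thesis using tight unfolding nbhd_bound_def by simp
      next
        assume "cheap_odd_cycle (card N_rest)"
        then show ?thesis using cheap_odd_cycle_mono card_C_N_rest unfolding nbhd_bound_def by simp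
      qed
    qed
  qed
qed

end

lemma nbhd_bound_step:
  assumes IH: "\<And>m. 0 < m \<Longrightarrow> m < length P \<Longrightarrow> nbhd_bound (drop m P)"
  shows "nbhd_bound P"
proof -
  obtain Q where Q: "is_walk T Q" "distinct Q" "hd Q = hd P" "last Q = P ! lastC" "set Q \<subseteq> C"
    using C_tree_path_exists by metis
  show ?thesis
  proof (cases "Suc lastC < length P")
    case False
    then have "lastC = length P - 1" using lastC_less by simp
    then show ?thesis using cheap_walk_if_lastC_last[OF Q] unfolding nbhd_bound_def by blast
  next
    case True
    then have "nbhd_bound (drop (Suc lastC) P)" using IH by simp
    then have "cheap_walk (P ! Suc lastC) (last P) (card N_rest) \<or> cheap_odd_cycle (card N_rest)"
      using True unfolding nbhd_bound_def by (simp add: hd_drop_conv_nth)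
    then show ?thesis
      using nbhd_bound_via_rest_walk[OF Q IH True] card_C_N_rest cheap_odd_cycle_mono
      unfolding nbhd_bound_def by fastforce
  qed
qed

end

context tree_weighted_graph
begin

theorem nbhd_bound_holds:
  "P \<noteq> [] \<Longrightarrow> distinct P \<Longrightarrow> path_edges P \<subseteq> E \<Longrightarrow> set P \<subseteq> V \<Longrightarrow> set P \<noteq> V \<Longrightarrow> nbhd_bound P"
proof (induction "length P" arbitrary: P rule: less_induct)
  case less
  then interpret tree_path_graph V E T w P by unfold_locales
  show ?case
  proof (rule nbhd_bound_step)
    fix m assume m: "0 < m" "m < length P"
    show "nbhd_bound (drop m P)"
    proof (rule less.hyps)
      show "length (drop m P) < length P" "drop m P \<noteq> []" "distinct (drop m P)"
        using m path_distinct by auto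
      show "path_edges (drop m P) \<subseteq> E" using path_edges_drop_subset path_in_E by (rule order_trans)
      show "set (drop m P) \<subseteq> V" using set_drop_subset path_in_V by (rule order_trans)
      show "set (drop m P) \<noteq> V" using set_drop_subset[of m P] path_in_V path_nonspanning by auto
    qed
  qed
qed

lemma card_nbhd_lower_bound:
  assumes "nbhd_bound P"
    and "\<forall>q. is_path E q \<and> hd q = hd P \<and> last q = last P \<longrightarrow> l \<le> path_weight w q"
    and "\<forall>c. is_cycle E c \<and> odd (cycle_weight w c) \<longrightarrow> l + 4 \<le> cycle_weight w c"
  shows "l + 4 \<le> 3 * card (nbhd P)"
  using assms(1) unfolding nbhd_bound_def
proof
  assume "cheap_walk (hd P) (last P) (card (nbhd P))"
  then obtain q where q: "is_walk E q" "hd q = hd P" "last q = last P"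
      "walk_weight w q + 4 \<le> 3 * card (nbhd P)"
    unfolding cheap_walk_def by blast
  obtain p where "is_walk E p" "distinct p" "hd p = hd q" "last p = last q"
      "walk_weight w p \<le> walk_weight w q"
    using walk_to_path[OF q(1), of w] by blast
  then have "l \<le> walk_weight w q"
    using assms(2) q(2,3) by (metis is_path_iff_walk path_weight_eq_walk_weight order_trans)
  then show ?thesis using q(4) by simp
next
  assume "cheap_odd_cycle (card (nbhd P))"
  then show ?thesis using assms(3) unfolding cheap_odd_cycle_def by (meson order_trans)
qed

end

theorem corollary5p2:
  fixes V :: "'a set" and E T :: "'a set set" and w :: "'a set \<Rightarrow> nat"
    and P :: "'a list" and x y :: 'a and l :: nat
  assumes "odd l" and "l \<ge> 13"
    and "graph V E"
    and "\<forall>e\<in>E. w e \<in> {3, 4, 5}"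
    and "spanning_tree V E T" and "\<forall>e\<in>T. w e = 3"
    and "is_path E P" and "E = T \<union> path_edges P" and "set P \<noteq> V"
    and "hd P = x" and "last P = y"
    and "\<forall>c. is_cycle E c \<and> odd (cycle_weight w c) \<longrightarrow> cycle_weight w c \<ge> l + 4"
    and "\<forall>q. is_path E q \<and> hd q = x \<and> last q = y \<longrightarrow> path_weight w q \<ge> l"
  shows "real (card (closed_nbhd V E (set P))) \<ge> real l / 3 + 4 / 3"
proof -
  interpret tree_weighted_graph V E T w
    using assms(3-6) unfolding spanning_tree_def by unfold_locales auto
  have P: "is_walk E P" "distinct P" using assms(7) is_path_iff_walk by auto
  have "0 < walk_weight w P"
    using assms(2,7,10,11,13) path_weight_eq_walk_weight by (metis le_trans not_le zero_less_numeral)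
  then obtain u v r where P_Cons: "P = u # v # r" by (metis walk_weight.elims less_irrefl)
  have "nbhd_bound P"
  proof (rule nbhd_bound_holds)
    show "set P \<subseteq> V" using walk_in_V P(1) unfolding P_Cons .
    show "path_edges P \<subseteq> E" using assms(8) by blast
  qed (use P P_Cons assms(9) in auto)
  moreover have "nbhd P = closed_nbhd V E (set P)" unfolding nbhd_def assms(8) ..
  ultimately have "l + 4 \<le> 3 * card (closed_nbhd V E (set P))"
    using card_nbhd_lower_bound[of P l] assms(10-13) by auto
  then show ?thesis by linarith
qed

end
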